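(* Let $k\ge 0$ be an integer with $k\not\equiv 1 \pmod 3$ and let $m=4k+2$. Then there exists a cyclic DCA$(4,4m+1;4m)$, i.e. a cyclic DCA$(4,16k+9;16k+8)$, satisfying P1 and P2.
   Context: A difference covering array DCA$(k',\eta;n)$ over $\mathbb{Z}_n$ (a cyclic DCA) is an $\eta\times k'$ matrix $Q=[q(i,j)]$ with entries in $\mathbb{Z}_n$ such that for every pair of distinct columns $j,j'$ the multiset $\{q(i,j)-q(i,j') : 0\le i\le \eta-1\}$ contains every element of $\mathbb{Z}_n$ at least once. A DCA$(k',n+1;n)$ is taken in normalized form: all entries of its last row (row $n$) and last column (column $k'-1$) equal $0$. It satisfies P1 if $0$ occurs at least twice in every column, and P2 if for all distinct columns $j,j'$ with $j\neq k'-1\neq j'$, the set $\{q(i,j)-q(i,j') : 0\le i\le n-1\}$ equals $\mathbb{Z}_n\setminus\{0\}$. *)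

theory Defs
  imports Main
begin

(* An eta x k' matrix over Z_n is represented by Q :: nat => nat => int,
   Q i j = entry in row i (0 <= i < eta), column j (0 <= j < k'),
   with entries taken as representatives in {0..<n}; arithmetic is mod n. *)

definition entries_in_Zn :: "nat \<Rightarrow> nat \<Rightarrow> int \<Rightarrow> (nat \<Rightarrow> nat \<Rightarrow> int) \<Rightarrow> bool" where
  "entries_in_Zn k' eta n Q \<longleftrightarrow> (\<forall>i<eta. \<forall>j<k'. 0 \<le> Q i j \<and> Q i j < n)"

definition is_DCA :: "nat \<Rightarrow> nat \<Rightarrow> int \<Rightarrow> (nat \<Rightarrow> nat \<Rightarrow> int) \<Rightarrow> bool" where
  "is_DCA k' eta n Q \<longleftrightarrow> n \<ge> 1 \<and> entries_in_Zn k' eta n Q \<and>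
     (\<forall>j<k'. \<forall>j'<k'. j \<noteq> j' \<longrightarrow>
        (\<forall>d\<in>{0..<n}. \<exists>i<eta. (Q i j - Q i j') mod n = d))"

definition is_normalized_DCA :: "nat \<Rightarrow> nat \<Rightarrow> (nat \<Rightarrow> nat \<Rightarrow> int) \<Rightarrow> bool" where
  "is_normalized_DCA k' n Q \<longleftrightarrow> is_DCA k' (n+1) (int n) Q \<and>
     (\<forall>j<k'. Q n j = 0) \<and> (\<forall>i<n+1. Q i (k'-1) = 0)"

definition DCA_P1 :: "nat \<Rightarrow> nat \<Rightarrow> (nat \<Rightarrow> nat \<Rightarrow> int) \<Rightarrow> bool" where
  "DCA_P1 k' eta Q \<longleftrightarrow> (\<forall>j<k'. card {i. i < eta \<and> Q i j = 0} \<ge> 2)"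

definition DCA_P2 :: "nat \<Rightarrow> nat \<Rightarrow> (nat \<Rightarrow> nat \<Rightarrow> int) \<Rightarrow> bool" where
  "DCA_P2 k' n Q \<longleftrightarrow> (\<forall>j<k'. \<forall>j'<k'. j \<noteq> j' \<and> j \<noteq> k'-1 \<and> j' \<noteq> k'-1 \<longrightarrow>
      {(Q i j - Q i j') mod int n | i. i < n} = {1..<int n})"

end

theory Submission
  imports Defs "HOL-Number_Theory.Cong"
begin

text \<open>Write N = 16k + 8 = 8t with t = odd_part k = 2k + 1, so Z_N = Z_8 x Z_t by the Chinese
  remainder theorem. Row a + 8x (a < 8, x \<le> 2k) of column j < 3 is the element
  (\<sigma>_x(j, a), \<lambda>_j(\<sigma>_x(j, a)) x), where \<sigma>_x is one of three tables of permutations of Z_8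
  (for x = 0, for 1 \<le> x \<le> k and for x > k) and \<lambda>_j a table of small multipliers; the last row
  and column are zero. The difference of two columns j, j' < 3 in that row is (\<delta>, \<mu> x) with
  \<delta>, \<mu> read off the tables. All \<lambda>- and \<mu>-values divide 72, and t is prime to 72 exactly
  because k \<noteq> 1 (mod 3), so multiplication by them permutes Z_t. The layer x = 0 yields the
  differences (\<delta>, 0) with \<delta> \<noteq> 0, and the reflection x \<mapsto> t - x lets the two other layers
  share the non-zero residues modulo t; this gives P2, and the zero row and column supply the
  rest of the DCA conditions and P1.\<close>

lemma cong_solve_below:
  fixes c y n :: int
  assumes "coprime c n" "0 < n"
  obtains x where "0 \<le> x" "x < n" "[c * x = y] (mod n)"
proof -
  obtain w where w: "[c * w = 1] (mod n)"
    using cong_solve_coprime_int[OF assms(1)] by blast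
  have "[c * (w * y mod n) = c * (w * y)] (mod n)"
    by (simp add: cong_def mod_mult_right_eq)
  also have "[c * (w * y) = 1 * y] (mod n)"
    unfolding mult.assoc[symmetric] by (rule cong_scalar_right[OF w])
  finally have "[c * (w * y mod n) = y] (mod n)"
    by simp
  then show thesis
    using that assms(2) by (meson pos_mod_bound pos_mod_sign)
qed

definition crt :: "int \<Rightarrow> int \<Rightarrow> int \<Rightarrow> int \<Rightarrow> int" where
  "crt m n u v = (SOME x. 0 \<le> x \<and> x < m * n \<and> [x = u] (mod m) \<and> [x = v] (mod n))"

lemma crt_spec:
  assumes "coprime m n" "0 < m" "0 < n"
  shows "0 \<le> crt m n u v \<and> crt m n u v < m * n \<and>
    [crt m n u v = u] (mod m) \<and> [crt m n u v = v] (mod n)"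
  unfolding crt_def
proof (rule someI_ex)
  obtain x where x: "[x = u] (mod m)" "[x = v] (mod n)"
    using binary_chinese_remainder_int[OF assms(1)] by blast
  have "[x mod (m * n) = x] (mod m)" "[x mod (m * n) = x] (mod n)"
    by (simp_all add: cong_def mod_mod_cancel)
  with x have "[x mod (m * n) = u] (mod m)" "[x mod (m * n) = v] (mod n)"
    using cong_trans by blast+
  moreover have "0 \<le> x mod (m * n)" "x mod (m * n) < m * n"
    using assms(2,3) by simp_all
  ultimately show "\<exists>y. 0 \<le> y \<and> y < m * n \<and> [y = u] (mod m) \<and> [y = v] (mod n)"
    by blast
qed

lemma coprime_if_dvd_72:
  fixes c n :: int
  assumes "odd n" "\<not> 3 dvd n" "c dvd 72"
  shows "coprime c n"
proof -
  have "coprime 2 n" "coprime 3 n"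
    using assms(1,2) by (simp_all add: prime_imp_coprime_int)
  then have "coprime (2 ^ 3) n" "coprime (3 ^ 2) n"
    using coprime_power_left_iff by blast+
  then have "coprime (2 ^ 3 * 3 ^ 2) n"
    using coprime_mult_left_iff by blast
  then show ?thesis
    using assms(3) coprime_divisors dvd_refl by fastforce
qed

section \<open>The certificate tables\<close>

text \<open>A layer \<sigma> lists, for each column j < 3, the permutation a \<mapsto> \<sigma> ! j ! a of Z_8;
  lambda ! j ! v is the multiplier of the Z_t-coordinate of an entry v of column j.\<close>

definition zero_layer :: "nat list list" where
  "zero_layer = [[0,1,2,3,4,5,6,7], [6,5,3,2,0,7,1,4], [4,2,7,6,3,1,0,5]]"

definition low_layer :: "nat list list" where
  "low_layer = [[0,1,2,3,4,5,6,7], [2,0,6,7,5,3,1,4], [4,3,7,6,2,1,5,0]]"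

definition high_layer :: "nat list list" where
  "high_layer = [[0,1,2,3,4,5,6,7], [7,1,0,5,4,6,3,2], [2,1,7,6,4,3,5,0]]"

definition lambda :: "int list list" where
  "lambda = [[1,1,1,1,-1,-1,-2,2], [-1,-1,3,-3,1,3,3,-1], [4,-2,2,2,2,-4,2,2]]"

definition diff_mod8 :: "nat list list \<Rightarrow> nat \<Rightarrow> nat \<Rightarrow> nat \<Rightarrow> int" where
  "diff_mod8 \<sigma> j j' a = (int (\<sigma> ! j ! a) - int (\<sigma> ! j' ! a)) mod 8"

definition lambda_diff :: "nat list list \<Rightarrow> nat \<Rightarrow> nat \<Rightarrow> nat \<Rightarrow> int" where
  "lambda_diff \<sigma> j j' a = lambda ! j ! (\<sigma> ! j ! a) - lambda ! j' ! (\<sigma> ! j' ! a)"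

text \<open>The table facts are checked by evaluation; code_simp evaluates list_all/list_ex over
  [0..<n] much faster than the bounded quantifiers, hence the two rewrite rules.\<close>

lemma all_less_iff_list_all: "(\<forall>x<n. P x) \<longleftrightarrow> list_all P [0..<n]"
  by (auto simp: list_all_iff)

lemma ex_less_iff_list_ex: "(\<exists>x<n. P x) \<longleftrightarrow> list_ex P [0..<n]"
  by (auto simp: list_ex_iff)

lemma layers_surjective:
  "\<forall>\<sigma>\<in>{zero_layer, low_layer, high_layer}. \<forall>j<3. \<forall>v<8. \<exists>a<8. \<sigma> ! j ! a = v"
  unfolding all_less_iff_list_all ex_less_iff_list_ex zero_layer_def low_layer_def high_layer_def
  by code_simp

lemma lambda_dvd_12: "\<forall>j<3. \<forall>v<8. lambda ! j ! v dvd 12"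
  unfolding all_less_iff_list_all lambda_def by code_simp

lemma zero_layer_diff_mod8:
  "\<forall>j<3. \<forall>j'<3. j \<noteq> j' \<longrightarrow>
     (\<forall>a<8. diff_mod8 zero_layer j j' a \<noteq> 0) \<and>
     (\<forall>e<8. e \<noteq> 0 \<longrightarrow> (\<exists>a<8. diff_mod8 zero_layer j j' a = int e))"
  unfolding all_less_iff_list_all ex_less_iff_list_ex zero_layer_def diff_mod8_def by code_simp

lemma lambda_diff_dvd_72:
  "\<forall>\<sigma>\<in>{low_layer, high_layer}. \<forall>j<3. \<forall>j'<3. j \<noteq> j' \<longrightarrow>
     (\<forall>a<8. lambda_diff \<sigma> j j' a \<noteq> 0 \<and> lambda_diff \<sigma> j j' a dvd 72)"
  unfolding all_less_iff_list_all low_layer_def high_layer_def lambda_def lambda_diff_def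
  by code_simp

text \<open>If x solves c x = r modulo t = 2k + 1, then t - x solves (-c) x = r, and exactly one of x
  and t - x is at most k. So a pair of positions with equal \<lambda>-differences in the low and high
  layer, or with opposite \<lambda>-differences in the same layer, reaches every non-zero residue.\<close>

definition matched_pair :: "nat \<Rightarrow> nat \<Rightarrow> nat \<Rightarrow> nat \<Rightarrow> nat \<Rightarrow> bool" where
  "matched_pair j j' e a b \<longleftrightarrow>
     (diff_mod8 low_layer j j' a = int e \<and> diff_mod8 high_layer j j' b = int e \<and>
      lambda_diff low_layer j j' a = lambda_diff high_layer j j' b) \<or>
     (diff_mod8 low_layer j j' a = int e \<and> diff_mod8 low_layer j j' b = int e \<and>
      lambda_diff low_layer j j' b = - lambda_diff low_layer j j' a) \<or>
     (diff_mod8 high_layer j j' a = int e \<and> diff_mod8 high_layer j j' b = int e \<and>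
      lambda_diff high_layer j j' b = - lambda_diff high_layer j j' a)"

lemma matched_pair_exists:
  "\<forall>j<3. \<forall>j'<3. j \<noteq> j' \<longrightarrow> (\<forall>e<8. \<exists>a<8. \<exists>b<8. matched_pair j j' e a b)"
  unfolding all_less_iff_list_all ex_less_iff_list_ex matched_pair_def
    low_layer_def high_layer_def lambda_def lambda_diff_def diff_mod8_def
  by code_simp

definition odd_part :: "nat \<Rightarrow> int" where
  "odd_part k = int (2 * k + 1)"

lemma odd_part_pos: "0 < odd_part k"
  by (simp add: odd_part_def)

lemma coprime_8_odd_part: "coprime 8 (odd_part k)"
proof -
  have "coprime 2 (odd_part k)"
    by (simp add: odd_part_def)
  then have "coprime (2 ^ 3) (odd_part k)"
    using coprime_power_left_iff by blast
  then show ?thesis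
    by simp
qed

lemma coprime_odd_part:
  assumes "k mod 3 \<noteq> 1" "c dvd 72"
  shows "coprime c (odd_part k)"
proof (rule coprime_if_dvd_72[OF _ _ assms(2)])
  show "odd (odd_part k)"
    by (simp add: odd_part_def)
  show "\<not> 3 dvd odd_part k"
    using assms(1) unfolding odd_part_def by presburger
qed

lemma cong_mod_8_odd_part_iff:
  "[p = q] (mod 8 * odd_part k) \<longleftrightarrow> [p = q] (mod 8) \<and> [p = q] (mod odd_part k)"
  using coprime_cong_mult[OF _ _ coprime_8_odd_part] cong_dvd_modulus dvd_triv_left dvd_triv_right
  by meson

lemma cong_solve_nonzero:
  assumes "coprime c (odd_part k)" "\<not> odd_part k dvd r"
  obtains x where "0 < x" "x \<le> 2 * k" "[c * int x = r] (mod odd_part k)"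
proof -
  obtain x0 where x0: "0 \<le> x0" "x0 < odd_part k" "[c * x0 = r] (mod odd_part k)"
    using cong_solve_below[OF assms(1) odd_part_pos] by blast
  have "x0 \<noteq> 0"
    using x0(3) assms(2) by (metis cong_0_iff cong_sym mult_zero_right)
  then have "0 < nat x0" "nat x0 \<le> 2 * k"
    using x0(1,2) by (simp_all add: odd_part_def)
  moreover have "int (nat x0) = x0"
    using x0(1) by simp
  ultimately show thesis
    using that x0(3) by metis
qed

lemma cong_reflect:
  assumes "[c * int x = r] (mod odd_part k)" "x \<le> 2 * k"
  shows "[- c * int (2 * k + 1 - x) = r] (mod odd_part k)"
proof -
  have "- c * int (2 * k + 1 - x) = c * int x + odd_part k * (- c)"
    using assms(2) by (simp add: odd_part_def of_nat_diff algebra_simps)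
  then show ?thesis
    using assms(1) unfolding cong_def by (simp only: mod_mult_self2)
qed

section \<open>The construction\<close>

definition layer :: "nat \<Rightarrow> nat \<Rightarrow> nat list list" where
  "layer k x = (if x = 0 then zero_layer else if x \<le> k then low_layer else high_layer)"

lemma layer_zero: "layer k 0 = zero_layer"
  and layer_low: "0 < x \<Longrightarrow> x \<le> k \<Longrightarrow> layer k x = low_layer"
  and layer_high: "k < x \<Longrightarrow> layer k x = high_layer"
  by (simp_all add: layer_def)

lemma layer_surjective:
  assumes "j < 3" "v < 8"
  obtains a where "a < 8" "layer k x ! j ! a = v"
proof -
  have "layer k x \<in> {zero_layer, low_layer, high_layer}"
    by (simp add: layer_def)
  then show thesis
    using layers_surjective assms that by blast
qed

lemma layer_reflect:
  assumes "0 < x" "x \<le> 2 * k" "\<sigma> \<in> {low_layer, high_layer}"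
  shows "layer k x = \<sigma> \<or> layer k (2 * k + 1 - x) = \<sigma>"
proof (cases "x \<le> k")
  case True
  then have "layer k x = low_layer" "layer k (2 * k + 1 - x) = high_layer"
    using assms(1) by (simp_all add: layer_low layer_high)
  then show ?thesis
    using assms(3) by blast
next
  case False
  then have "layer k x = high_layer" "layer k (2 * k + 1 - x) = low_layer"
    using assms(2) by (simp_all add: layer_low layer_high)
  then show ?thesis
    using assms(3) by blast
qed

definition dca :: "nat \<Rightarrow> nat \<Rightarrow> nat \<Rightarrow> int" where
  "dca k i j = (if i < 16 * k + 8 \<and> j < 3 then
     crt 8 (odd_part k) (int (layer k (i div 8) ! j ! (i mod 8)))
       (lambda ! j ! (layer k (i div 8) ! j ! (i mod 8)) * int (i div 8))
   else 0)"

lemma row_index: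
  fixes a x k :: nat
  assumes "a < 8" "x \<le> 2 * k"
  shows "a + 8 * x < 16 * k + 8" "(a + 8 * x) div 8 = x" "(a + 8 * x) mod 8 = a"
  using assms by auto

lemma dca_range: "0 \<le> dca k i j" "dca k i j < 8 * odd_part k"
  using crt_spec[OF coprime_8_odd_part _ odd_part_pos] odd_part_pos[of k]
  by (simp_all add: dca_def)

lemma dca_cong:
  assumes "a < 8" "x \<le> 2 * k" "j < 3"
  shows "[dca k (a + 8 * x) j = int (layer k x ! j ! a)] (mod 8)"
    "[dca k (a + 8 * x) j = lambda ! j ! (layer k x ! j ! a) * int x] (mod odd_part k)"
  using crt_spec[OF coprime_8_odd_part _ odd_part_pos] row_index[OF assms(1,2)] assms(3)
  by (simp_all add: dca_def)

lemma dca_diff_cong: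
  assumes "a < 8" "x \<le> 2 * k" "j < 3" "j' < 3"
  shows "[dca k (a + 8 * x) j - dca k (a + 8 * x) j' = diff_mod8 (layer k x) j j' a] (mod 8)"
    "[dca k (a + 8 * x) j - dca k (a + 8 * x) j'
       = lambda_diff (layer k x) j j' a * int x] (mod odd_part k)"
proof -
  show "[dca k (a + 8 * x) j - dca k (a + 8 * x) j' = diff_mod8 (layer k x) j j' a] (mod 8)"
    using cong_diff[OF dca_cong(1)[OF assms(1-3)] dca_cong(1)[OF assms(1,2,4)]]
    unfolding diff_mod8_def by (simp add: cong_def)
  show "[dca k (a + 8 * x) j - dca k (a + 8 * x) j'
       = lambda_diff (layer k x) j j' a * int x] (mod odd_part k)"
    using cong_diff[OF dca_cong(2)[OF assms(1-3)] dca_cong(2)[OF assms(1,2,4)]]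
    unfolding lambda_diff_def by (simp add: left_diff_distrib)
qed

lemma dca_column_surjective:
  assumes "k mod 3 \<noteq> 1" "j < 3" "0 \<le> z" "z < 8 * odd_part k"
  shows "\<exists>i<16 * k + 8. dca k i j = z"
proof -
  define v where "v = nat (z mod 8)"
  have v: "v < 8" "[int v = z] (mod 8)"
    unfolding v_def cong_def by auto
  have "lambda ! j ! v dvd 72"
    using lambda_dvd_12 assms(2) v(1) dvd_trans[of "lambda ! j ! v" 12 72] by simp
  then have "coprime (lambda ! j ! v) (odd_part k)"
    using coprime_odd_part[OF assms(1)] by blast
  then obtain x0 where x0: "0 \<le> x0" "x0 < odd_part k" "[lambda ! j ! v * x0 = z] (mod odd_part k)"
    using cong_solve_below odd_part_pos by blast
  define x where "x = nat x0"
  have x: "x \<le> 2 * k" "int x = x0"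
    using x0(1,2) unfolding x_def odd_part_def by auto
  obtain a where a: "a < 8" "layer k x ! j ! a = v"
    using layer_surjective[OF assms(2) v(1)] .
  have "[dca k (a + 8 * x) j = z] (mod 8 * odd_part k)"
    unfolding cong_mod_8_odd_part_iff
    using dca_cong[OF a(1) x(1) assms(2)] a(2) v(2) x0(3) x(2) cong_trans by metis
  then have "dca k (a + 8 * x) j = z"
    using cong_less_imp_eq_int dca_range assms(3,4) by blast
  then show ?thesis
    using row_index(1)[OF a(1) x(1)] by blast
qed

lemma dca_diff_nonzero:
  assumes "k mod 3 \<noteq> 1" "i < 16 * k + 8" "j < 3" "j' < 3" "j \<noteq> j'"
  shows "\<not> [dca k i j = dca k i j'] (mod 8 * odd_part k)"
proof
  define a x where "a = i mod 8" and "x = i div 8"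
  have ax: "a < 8" "x \<le> 2 * k" "i = a + 8 * x"
    using assms(2) unfolding a_def x_def by auto
  assume "[dca k i j = dca k i j'] (mod 8 * odd_part k)"
  then have "[dca k i j - dca k i j' = 0] (mod 8)" "[dca k i j - dca k i j' = 0] (mod odd_part k)"
    unfolding cong_mod_8_odd_part_iff by (simp_all add: cong_iff_dvd_diff)
  then have diffs: "[diff_mod8 (layer k x) j j' a = 0] (mod 8)"
      "[lambda_diff (layer k x) j j' a * int x = 0] (mod odd_part k)"
    using dca_diff_cong[OF ax(1,2) assms(3,4)] unfolding ax(3) by (meson cong_sym cong_trans)+
  show False
  proof (cases "x = 0")
    case True
    then show False
      using diffs(1) zero_layer_diff_mod8 ax(1) assms(3-5)
      by (simp add: layer_zero cong_def diff_mod8_def)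
  next
    case False
    then have "layer k x \<in> {low_layer, high_layer}"
      by (simp add: layer_def)
    then have "coprime (lambda_diff (layer k x) j j' a) (odd_part k)"
      using lambda_diff_dvd_72 coprime_odd_part[OF assms(1)] ax(1) assms(3-5) by blast
    then have "odd_part k dvd int x"
      using diffs(2) coprime_dvd_mult_right_iff coprime_commute by (metis cong_0_iff)
    moreover have "0 < int x" "int x < odd_part k"
      using False ax(2) by (simp_all add: odd_part_def)
    ultimately show False
      using zdvd_imp_le by fastforce
  qed
qed

definition reaches :: "nat \<Rightarrow> nat \<Rightarrow> nat \<Rightarrow> int \<Rightarrow> int \<Rightarrow> bool" where
  "reaches k j j' e r \<longleftrightarrow> (\<exists>a<8. \<exists>x\<le>2 * k. diff_mod8 (layer k x) j j' a = e \<and>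
     [lambda_diff (layer k x) j j' a * int x = r] (mod odd_part k))"

lemma reachesI:
  assumes "a < 8" "x \<le> 2 * k" "layer k x = \<sigma>" "diff_mod8 \<sigma> j j' a = e"
    "[lambda_diff \<sigma> j j' a * int x = r] (mod odd_part k)"
  shows "reaches k j j' e r"
  using assms unfolding reaches_def by blast

lemma reaches_low_high:
  assumes "coprime (lambda_diff low_layer j j' a) (odd_part k)" "\<not> odd_part k dvd r"
    "a < 8" "b < 8" "diff_mod8 low_layer j j' a = e" "diff_mod8 high_layer j j' b = e"
    "lambda_diff high_layer j j' b = lambda_diff low_layer j j' a"
  shows "reaches k j j' e r"
proof -
  obtain x where x: "0 < x" "x \<le> 2 * k" "[lambda_diff low_layer j j' a * int x = r] (mod odd_part k)"
    using cong_solve_nonzero[OF assms(1,2)] .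
  show ?thesis
  proof (cases "x \<le> k")
    case True
    show ?thesis
      using reachesI[OF assms(3) x(2) layer_low[OF x(1) True] assms(5) x(3)] .
  next
    case False
    show ?thesis
      using reachesI[OF assms(4) x(2) layer_high assms(6)] x(3) assms(7) False by simp
  qed
qed

lemma reaches_opposite_pair:
  assumes "\<sigma> \<in> {low_layer, high_layer}"
    "coprime (lambda_diff \<sigma> j j' a) (odd_part k)" "\<not> odd_part k dvd r"
    "a < 8" "b < 8" "diff_mod8 \<sigma> j j' a = e" "diff_mod8 \<sigma> j j' b = e"
    "lambda_diff \<sigma> j j' b = - lambda_diff \<sigma> j j' a"
  shows "reaches k j j' e r"
proof -
  obtain x where x: "0 < x" "x \<le> 2 * k" "[lambda_diff \<sigma> j j' a * int x = r] (mod odd_part k)"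
    using cong_solve_nonzero[OF assms(2,3)] .
  from layer_reflect[OF x(1,2) assms(1)] show ?thesis
  proof
    assume "layer k x = \<sigma>"
    show ?thesis
      by (rule reachesI[OF assms(4) x(2) \<open>layer k x = \<sigma>\<close> assms(6) x(3)])
  next
    assume reflected: "layer k (2 * k + 1 - x) = \<sigma>"
    have "2 * k + 1 - x \<le> 2 * k"
      using x(1) by simp
    moreover have "[lambda_diff \<sigma> j j' b * int (2 * k + 1 - x) = r] (mod odd_part k)"
      using cong_reflect[OF x(3,2)] assms(8) by simp
    ultimately show ?thesis
      using reachesI[OF assms(5) _ reflected assms(7)] by blast
  qed
qed

lemma reaches_nonzero_residue:
  assumes "k mod 3 \<noteq> 1" "j < 3" "j' < 3" "j \<noteq> j'" "e < 8" "\<not> odd_part k dvd r"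
  shows "reaches k j j' (int e) r"
proof -
  obtain a b where ab: "a < 8" "b < 8" "matched_pair j j' e a b"
    using matched_pair_exists assms(2-5) by blast
  have coprime: "coprime (lambda_diff \<sigma> j j' a) (odd_part k)" if "\<sigma> \<in> {low_layer, high_layer}" for \<sigma>
    using lambda_diff_dvd_72 coprime_odd_part[OF assms(1)] that ab(1) assms(2-4) by blast
  from ab(3) show ?thesis
    unfolding matched_pair_def
  proof (elim disjE conjE)
    assume "diff_mod8 low_layer j j' a = int e" "diff_mod8 high_layer j j' b = int e"
      "lambda_diff low_layer j j' a = lambda_diff high_layer j j' b"
    then show ?thesis
      using reaches_low_high[OF coprime assms(6) ab(1,2)] by simp
  next
    assume "diff_mod8 low_layer j j' a = int e" "diff_mod8 low_layer j j' b = int e"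
      "lambda_diff low_layer j j' b = - lambda_diff low_layer j j' a"
    then show ?thesis
      using reaches_opposite_pair[where \<sigma> = low_layer, OF _ coprime assms(6) ab(1,2)] by simp
  next
    assume "diff_mod8 high_layer j j' a = int e" "diff_mod8 high_layer j j' b = int e"
      "lambda_diff high_layer j j' b = - lambda_diff high_layer j j' a"
    then show ?thesis
      using reaches_opposite_pair[where \<sigma> = high_layer, OF _ coprime assms(6) ab(1,2)] by simp
  qed
qed

lemma dca_diff_surjective:
  assumes "k mod 3 \<noteq> 1" "j < 3" "j' < 3" "j \<noteq> j'" "\<not> 8 * odd_part k dvd d"
  shows "\<exists>i<16 * k + 8. [dca k i j - dca k i j' = d] (mod 8 * odd_part k)"
proof -
  define e where "e = nat (d mod 8)"
  have e: "e < 8" "[int e = d] (mod 8)"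
    unfolding e_def cong_def by auto
  have realized: ?thesis
    if "a < 8" "x \<le> 2 * k" "diff_mod8 (layer k x) j j' a = int e"
      "[lambda_diff (layer k x) j j' a * int x = d] (mod odd_part k)" for a x
  proof -
    have "[dca k (a + 8 * x) j - dca k (a + 8 * x) j' = d] (mod 8 * odd_part k)"
      unfolding cong_mod_8_odd_part_iff
      using dca_diff_cong[OF that(1,2) assms(2,3)] that(3,4) e(2) cong_trans by metis
    then show ?thesis
      using row_index(1)[OF that(1,2)] by blast
  qed
  show ?thesis
  proof (cases "odd_part k dvd d")
    case True
    have "e \<noteq> 0"
    proof
      assume "e = 0"
      then have "8 dvd d"
        using e(2) by (metis cong_0_iff cong_sym of_nat_0)
      then show False
        using True assms(5) coprime_8_odd_part divides_mult by blast
    qed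
    then obtain a where "a < 8" "diff_mod8 zero_layer j j' a = int e"
      using zero_layer_diff_mod8 assms(2-4) e(1) by blast
    then show ?thesis
      using realized[of a 0] True by (metis cong_0_iff cong_sym layer_zero mult_zero_right of_nat_0 le0)
  next
    case False
    then show ?thesis
      using reaches_nonzero_residue[OF assms(1-4) e(1)] realized unfolding reaches_def by blast
  qed
qed

lemma dca_last_row: "dca k (16 * k + 8) j = 0"
  and dca_last_column: "dca k i 3 = 0"
  by (simp_all add: dca_def)

lemma dca_diff_cover:
  assumes "k mod 3 \<noteq> 1" "j < 4" "j' < 4" "j \<noteq> j'"
  shows "\<exists>i\<le>16 * k + 8. [dca k i j - dca k i j' = d] (mod 8 * odd_part k)"
proof -
  let ?n = "8 * odd_part k"
  have mod_bounds: "0 \<le> y mod ?n" "y mod ?n < ?n" for y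
    using odd_part_pos[of k] by simp_all
  consider "j < 3" "j' < 3" | "j < 3" "j' = 3" | "j = 3" "j' < 3"
    using assms(2-4) by linarith
  then show ?thesis
  proof cases
    case 1
    show ?thesis
    proof (cases "?n dvd d")
      case True
      then show ?thesis
        using dca_last_row by (metis cong_0_iff cong_sym diff_self order_refl)
    next
      case False
      then show ?thesis
        using dca_diff_surjective[OF assms(1) 1 assms(4)] by (meson less_imp_le)
    qed
  next
    case 2
    obtain i where "i < 16 * k + 8" "dca k i j = d mod ?n"
      using dca_column_surjective[OF assms(1) 2(1) mod_bounds] by blast
    then show ?thesis
      using 2(2) dca_last_column by (auto simp: cong_def intro!: exI[of _ i])
  next
    case 3
    obtain i where "i < 16 * k + 8" "dca k i j' = (- d) mod ?n"
      using dca_column_surjective[OF assms(1) 3(2) mod_bounds] by blast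
    then have "[dca k i j - dca k i j' = d] (mod ?n)"
      using 3(1) dca_last_column by (simp add: cong_def mod_minus_eq)
    then show ?thesis
      using \<open>i < 16 * k + 8\<close> by (meson less_imp_le)
  qed
qed

lemma int_order_eq: "int (16 * k + 8) = 8 * odd_part k"
  by (simp add: odd_part_def)

lemma dca_normalized:
  assumes "k mod 3 \<noteq> 1"
  shows "is_normalized_DCA 4 (16 * k + 8) (dca k)"
proof -
  have "\<exists>i<16 * k + 8 + 1. (dca k i j - dca k i j') mod (8 * odd_part k) = d"
    if columns: "j < 4" "j' < 4" "j \<noteq> j'" and d: "0 \<le> d" "d < 8 * odd_part k" for j j' d
  proof -
    obtain i where "i \<le> 16 * k + 8" "[dca k i j - dca k i j' = d] (mod 8 * odd_part k)"
      using dca_diff_cover[OF assms columns] by blast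
    then show ?thesis
      using d by (auto simp: cong_def intro!: exI[of _ i])
  qed
  then show ?thesis
    using dca_range odd_part_pos[of k] dca_last_row dca_last_column
    unfolding is_normalized_DCA_def is_DCA_def entries_in_Zn_def int_order_eq by simp
qed

lemma dca_P1:
  assumes "k mod 3 \<noteq> 1"
  shows "DCA_P1 4 (16 * k + 9) (dca k)"
  unfolding DCA_P1_def
proof (intro allI impI)
  fix j :: nat
  assume "j < 4"
  obtain i where i: "i < 16 * k + 8" "dca k i j = 0"
  proof (cases "j < 3")
    case True
    then show thesis
      using dca_column_surjective[OF assms True, of 0] odd_part_pos[of k] that by auto
  next
    case False
    then have "j = 3"
      using \<open>j < 4\<close> by simp
    then show thesis
      using dca_last_column that[of 0] by simp
  qed
  then have "{i, 16 * k + 8} \<subseteq> {i. i < 16 * k + 9 \<and> dca k i j = 0}"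
    using dca_last_row by auto
  moreover have "card {i, 16 * k + 8} = 2"
    using i(1) by simp
  ultimately show "2 \<le> card {i. i < 16 * k + 9 \<and> dca k i j = 0}"
    by (metis card_mono finite_Collect_conjI finite_Collect_less_nat)
qed

lemma dca_P2:
  assumes "k mod 3 \<noteq> 1"
  shows "DCA_P2 4 (16 * k + 8) (dca k)"
  unfolding DCA_P2_def int_order_eq
proof (intro allI impI)
  fix j j' :: nat
  let ?n = "8 * odd_part k"
  assume "j < 4" "j' < 4" "j \<noteq> j' \<and> j \<noteq> 4 - 1 \<and> j' \<noteq> 4 - 1"
  then have jj: "j < 3" "j' < 3" "j \<noteq> j'"
    by auto
  show "{(dca k i j - dca k i j') mod ?n | i. i < 16 * k + 8} = {1..<?n}"
  proof (intro equalityI subsetI)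
    fix v
    assume "v \<in> {(dca k i j - dca k i j') mod ?n | i. i < 16 * k + 8}"
    then obtain i where i: "i < 16 * k + 8" "v = (dca k i j - dca k i j') mod ?n"
      by blast
    then have "v \<noteq> 0"
      using dca_diff_nonzero[OF assms i(1) jj] by (simp add: cong_iff_dvd_diff dvd_eq_mod_eq_0)
    moreover have "0 \<le> v" "v < ?n"
      using i(2) odd_part_pos[of k] by simp_all
    ultimately show "v \<in> {1..<?n}"
      by simp
  next
    fix v
    assume "v \<in> {1..<?n}"
    then have "\<not> ?n dvd v"
      using zdvd_imp_le by fastforce
    then obtain i where "i < 16 * k + 8" "[dca k i j - dca k i j' = v] (mod ?n)"
      using dca_diff_surjective[OF assms jj] by blast
    then show "v \<in> {(dca k i j - dca k i j') mod ?n | i. i < 16 * k + 8}"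
      using \<open>v \<in> {1..<?n}\<close> by (auto simp: cong_def)
  qed
qed

theorem mainTheorem20:
  fixes k :: nat
  assumes "k mod 3 \<noteq> 1"
  shows "\<exists>Q. is_normalized_DCA 4 (16*k+8) Q \<and> DCA_P1 4 (16*k+9) Q \<and> DCA_P2 4 (16*k+8) Q"
  using dca_normalized[OF assms] dca_P1[OF assms] dca_P2[OF assms] by blast

end
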